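(* Let $(\Omega,\mathcal{F})$ be a measurable space, $\mathcal{P}$ a family of probability measures on it, and $\mathbb{E}[\cdot]:=\sup_{P\in\mathcal{P}}E_P[\cdot]$ the associated upper (sublinear) expectation. Let $\{\epsilon_i\}_{i\ge1}$ and $\{\eta_i\}_{i\ge1}$ be real random variables such that, under each $P\in\mathcal{P}$, $\{\epsilon_i\}$ is i.i.d., $\{\eta_i\}$ is i.i.d., and $\{\eta_i\}$ is independent of $\{\epsilon_i\}$. Assume that for some $\alpha\in(0,1]$: $\mathbb{E}[\epsilon_1^2]=\overline{\sigma}^2$, $-\mathbb{E}[-\epsilon_1^2]=\underline{\sigma}^2>0$, $\mathbb{E}[|\epsilon_1|^{2+2\alpha}]<\infty$; $\mathbb{E}[\eta_1]=\mathbb{E}[-\eta_1]=0$, $\mathbb{E}[\eta_1^2]=\overline{\nu}^2$, $-\mathbb{E}[-\eta_1^2]=\underline{\nu}^2>0$, $\mathbb{E}[|\eta_1|^{2+2\alpha}]<\infty$. Let $0<\underline{\zeta}<\overline{\zeta}<\infty$ be constants. Let $\mathcal{F}_0:=\{\emptyset,\Omega\}$, $\mathcal{F}_i:=\sigma(\epsilon_1,\dots,\epsilon_i,\eta_1,\dots,\eta_i)$, and for $n\in\mathbb{N}$ let $\Sigma[\underline{\zeta},\overline{\zeta}]$ be the collection of all sequences $X=\{X_i\}_{i=1}^n$ with $X_i$ $\mathcal{F}_{i-1}$-measurable and taking values in $[\underline{\zeta},\overline{\zeta}]$. Given $p>0$, define \[ C_{\alpha}:=\big(32\overline{\zeta}^{2+2\alpha}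 \mathbb{E}[|\epsilon_1|^{2+2\alpha}]+32 \mathbb{E}[|\eta_1|^{2+2\alpha}]\big)^{\frac{1}{1+\alpha}},\qquad \gamma_n:=\underline{\sigma}^2\underline{\zeta}^2+\underline{\nu}^2-\frac{C_{\alpha}}{p\, n^{\frac{\alpha}{1+\alpha}}}. \] Then for every $n\in\mathbb{N}$, the test which rejects the null hypothesis $\mathcal{H}_0$ when $\sum_{i=1}^nY_i^2\le n\gamma_n$ has upper probability of missed detections at most $p$, i.e. \[ \sup_{P\in\mathcal{P}}\ \sup_{X\in\Sigma[\underline{\zeta},\overline{\zeta}]}\ P\Big(\sum_{i=1}^{n}(\epsilon_iX_i+\eta_i)^2\leq n\gamma_n\Big)\leq p. \]
   Context: Detection setting: the observations are $Y_1,\dots,Y_n$, and the binary hypothesis test is $\mathcal{H}_0: Y_i=\epsilon_iX_i+\eta_i$ ($i=1,\dots,n$) versus $\mathcal{H}_1: Y_i=\eta_i$ ($i=1,\dots,n$), where $\epsilon_i$ is channel fading, $\eta_i$ noise and $X=\{X_i\}$ the (feedback-dependent, predictable) input. A missed detection is choosing $\mathcal{H}_1$ when $\mathcal{H}_0$ holds; its upper probability is the supremum over $P\in\mathcal{P}$ and $X\in\Sigma[\underline\zeta,\overline\zeta]$ of the probability under $\mathcal{H}_0$ of choosing $\mathcal{H}_1$. *)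

theory Defs
  imports "HOL-Probability.Probability"
begin

definition upexp :: "'a measure set \<Rightarrow> ('a \<Rightarrow> real) \<Rightarrow> ereal" where
  "upexp Ps f = (SUP P\<in>Ps. ereal (integral\<^sup>L P f))"

text \<open>Upper expectation of a nonnegative quantity, via the nonnegative Lebesgue integral
  (used for moment-finiteness conditions, so that finiteness is genuine).\<close>
definition upexp_nn :: "'a measure set \<Rightarrow> ('a \<Rightarrow> real) \<Rightarrow> ennreal" where
  "upexp_nn Ps f = (SUP P\<in>Ps. (\<integral>\<^sup>+ x. ennreal (f x) \<partial>P))"

definition filt :: "'a measure \<Rightarrow> (nat \<Rightarrow> 'a \<Rightarrow> real) \<Rightarrow> (nat \<Rightarrow> 'a \<Rightarrow> real) \<Rightarrow> nat \<Rightarrow> 'a measure" where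
  "filt M eps eta i = sigma (space M)
     (\<Union>j\<in>{1..i}. {eps j -` B \<inter> space M | B. B \<in> sets borel}
                  \<union> {eta j -` B \<inter> space M | B. B \<in> sets borel})"

definition Sigma_adm :: "'a measure \<Rightarrow> (nat \<Rightarrow> 'a \<Rightarrow> real) \<Rightarrow> (nat \<Rightarrow> 'a \<Rightarrow> real) \<Rightarrow> nat
    \<Rightarrow> real \<Rightarrow> real \<Rightarrow> (nat \<Rightarrow> 'a \<Rightarrow> real) set" where
  "Sigma_adm M eps eta n zl zu = {X. \<forall>i\<in>{1..n}.
      X i \<in> borel_measurable (filt M eps eta (i - 1)) \<and>
      (\<forall>\<omega>\<in>space M. zl \<le> X i \<omega> \<and> X i \<omega> \<le> zu)}"

end

(* Fix P in the family and a predictable input X, and clip each received energy Y_i^2 at a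
   level c.  Conditionally on F_(i-1), the clipped energy min (Y_i^2) c has mean at least
   sigma_l^2 zeta_l^2 + nu_l^2 - K / c^alpha, because clipping costs at most the (2+2alpha)-th
   moment divided by c^alpha, and second moment at most c^(1-alpha) K, where K bounds the
   (2+2alpha)-th moment of eps_i x + eta_i for x <= zeta_u.  The centred clipped energies are
   orthogonal martingale differences, so a total energy below n gamma_n = n (sigma_l^2 zeta_l^2
   + nu_l^2) - c forces their sum below -(c - n K / c^alpha), and Chebyshev's inequality bounds
   the probability of that by n c^(1-alpha) K / (c - n K / c^alpha)^2.  The level
   c = n^(1/(1+alpha)) C_alpha / p makes this at most p. *)

theory Submission
  imports Defs
begin

lemma add_powr_le_two_powr:
  fixes a b q :: real
  assumes "a \<ge> 0" "b \<ge> 0" "q \<ge> 1"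
  shows "(a + b) powr q \<le> 2 powr (q - 1) * (a powr q + b powr q)"
proof (cases "a = 0 \<or> b = 0")
  case True
  have "1 \<le> 2 powr (q - 1)" using assms by (simp add: ge_one_powr_ge_zero)
  moreover have "a powr q + b powr q \<ge> 0" by simp
  ultimately have "a powr q + b powr q \<le> 2 powr (q - 1) * (a powr q + b powr q)"
    by (metis mult_le_cancel_right1 not_le)
  then show ?thesis using True by auto
next
  case False
  then have ab: "a > 0" "b > 0" using assms by auto
  have "((1 - 1/2) *\<^sub>R a + (1/2) *\<^sub>R b) powr q \<le> (1 - 1/2) * a powr q + (1/2) * b powr q"
    by (rule convex_onD[OF powr_convex[OF assms(3)]]) (use ab in auto)
  then have midpoint: "((a + b) / 2) powr q \<le> (a powr q + b powr q) / 2"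
    by (simp add: field_simps)
  have "(a + b) powr q = 2 powr q * ((a + b) / 2) powr q"
    using ab by (simp add: powr_divide)
  also have "\<dots> \<le> 2 powr q * ((a powr q + b powr q) / 2)"
    by (intro mult_left_mono midpoint) auto
  also have "\<dots> = 2 powr (q - 1) * (a powr q + b powr q)"
    by (simp add: powr_diff)
  finally show ?thesis .
qed

lemma abs_affine_powr_le:
  fixes e f x q :: real
  assumes "x \<ge> 0" "q \<ge> 1"
  shows "\<bar>e * x + f\<bar> powr q \<le> 2 powr (q - 1) * (x powr q * \<bar>e\<bar> powr q + \<bar>f\<bar> powr q)"
proof -
  have "\<bar>e * x + f\<bar> powr q \<le> (\<bar>e\<bar> * x + \<bar>f\<bar>) powr q"
    using assms by (intro powr_mono2) (auto simp: abs_mult intro: order.trans[OF abs_triangle_ineq])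
  also have "\<dots> \<le> 2 powr (q - 1) * ((\<bar>e\<bar> * x) powr q + \<bar>f\<bar> powr q)"
    using assms by (intro add_powr_le_two_powr) auto
  also have "(\<bar>e\<bar> * x) powr q = x powr q * \<bar>e\<bar> powr q"
    using assms by (simp add: powr_mult)
  finally show ?thesis .
qed

lemma power2_powr_eq_abs_powr: "((w::real)\<^sup>2) powr (1 + a) = \<bar>w\<bar> powr (2 + 2 * a)"
proof -
  have "w\<^sup>2 = \<bar>w\<bar> powr 2" by (cases "w = 0") (auto simp: powr_numeral)
  then have "(w\<^sup>2) powr (1 + a) = \<bar>w\<bar> powr (2 * (1 + a))" by (simp only: powr_powr)
  then show ?thesis by (simp add: algebra_simps)
qed

lemma power2_le_one_add_abs_powr:
  fixes e q :: real
  assumes "q \<ge> 2"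
  shows "e\<^sup>2 \<le> 1 + \<bar>e\<bar> powr q"
proof (cases "\<bar>e\<bar> \<le> 1")
  case True
  then have "\<bar>e\<bar> * \<bar>e\<bar> \<le> 1" by (intro mult_le_one) auto
  then have "e\<^sup>2 \<le> 1" by (simp add: power2_eq_square)
  then show ?thesis using powr_ge_zero[of "\<bar>e\<bar>" q] by linarith
next
  case False
  then have "\<bar>e\<bar> powr 2 \<le> \<bar>e\<bar> powr q" using assms by (intro powr_mono) auto
  then show ?thesis using False by (simp add: powr_numeral)
qed

lemma abs_le_two_add_abs_powr:
  fixes e q :: real
  assumes "q \<ge> 2"
  shows "\<bar>e\<bar> \<le> 2 + \<bar>e\<bar> powr q"
proof -
  have "\<bar>e\<bar> \<le> 1 + e\<^sup>2"
    using zero_le_power2[of "\<bar>e\<bar> - 1"] by (simp add: power2_eq_square algebra_simps)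
  then show ?thesis using power2_le_one_add_abs_powr[OF assms, of e] by simp
qed

lemma min_ge_sub_powr_div_powr:
  fixes z c a :: real
  assumes "z \<ge> 0" "c > 0" "a > 0"
  shows "z - z powr (1 + a) / c powr a \<le> min z c"
proof (cases "z \<le> c")
  case True then show ?thesis using assms by simp
next
  case False
  then have "z > 0" using assms by auto
  have "1 \<le> (z / c) powr a" using False assms by (intro ge_one_powr_ge_zero) auto
  then have "z \<le> z * (z / c) powr a" using \<open>z > 0\<close> by simp
  also have "z * (z / c) powr a = z powr (1 + a) / c powr a"
    using \<open>z > 0\<close> assms by (simp add: powr_divide powr_add)
  finally show ?thesis using False assms by simp
qed

lemma power2_min_le_powr:
  fixes z c a :: real
  assumes "z \<ge> 0" "c > 0" "a > 0" "a \<le> 1"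
  shows "(min z c)\<^sup>2 \<le> c powr (1 - a) * z powr (1 + a)"
proof (cases "z = 0")
  case True then show ?thesis using assms by simp
next
  case False
  define m where "m = min z c"
  have m: "m > 0" "m \<le> c" "m \<le> z" using False assms by (auto simp: m_def)
  have "m\<^sup>2 = m powr (1 - a) * m powr (1 + a)"
    using m by (simp add: powr_add[symmetric] powr_numeral)
  also have "\<dots> \<le> c powr (1 - a) * z powr (1 + a)"
    using m assms by (intro mult_mono powr_mono2) auto
  finally show ?thesis by (simp add: m_def)
qed

text \<open>With \<open>t = n K / c powr (1 + a) = 2 powr (1 + 2 a) p powr (1 + a) / 32 \<le> p / 4\<close>, the
  left-hand side of the last claim equals \<open>t / (1 - t)\<^sup>2 \<le> (p / 4) / (3 / 4)\<^sup>2 \<le> p\<close>.\<close>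
lemma truncation_level:
  fixes n :: nat and a p L :: real
  assumes a: "0 < a" "a \<le> 1" and p: "0 < p" "p < 1" and n: "n \<ge> 1" and L: "L > 0"
  defines "c \<equiv> real n powr (1 / (1 + a)) * (32 * L) powr (1 / (1 + a)) / p"
    and "K \<equiv> 2 powr (1 + 2 * a) * L"
  shows "c > 0" "c - n * (K / c powr a) > 0"
    "n * (c powr (1 - a) * K) / (c - n * (K / c powr a))\<^sup>2 \<le> p"
proof -
  have n0: "real n > 0" using n by simp
  show c0: "c > 0" using L n0 p by (simp add: c_def)
  have inv: "1 / (1 + a) * (1 + a) = 1" using a by simp
  have c_powr: "c powr (1 + a) = real n * (32 * L) / p powr (1 + a)"
    using n0 L p a by (simp add: c_def powr_mult powr_divide powr_powr inv)
  have t_eq: "real n * K / c powr (1 + a) = 2 powr (1 + 2 * a) * p powr (1 + a) / 32"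
    unfolding c_powr K_def using n0 L p by (simp add: field_simps)
  define t where "t = real n * K / c powr (1 + a)"
  have "2 powr (1 + 2 * a) \<le> 2 powr 3" using a by (intro powr_mono) auto
  moreover have "p powr (1 + a) \<le> p powr 1" using p a by (intro powr_mono') auto
  ultimately have "2 powr (1 + 2 * a) * p powr (1 + a) \<le> 8 * p"
    using p by (intro mult_mono) auto
  then have t: "0 \<le> t" "t \<le> p / 4" unfolding t_def t_eq by (auto simp: mult.commute)
  have tc: "real n * (K / c powr a) = t * c"
    unfolding t_def using c0 by (simp add: powr_add field_simps)
  have tau: "c - real n * (K / c powr a) = c * (1 - t)" unfolding tc by (simp add: algebra_simps)
  show "c - n * (K / c powr a) > 0" unfolding tau using c0 t p by simp
  have "c powr (1 - a) * c powr (1 + a) = c\<^sup>2"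
    using c0 by (simp add: powr_add[symmetric] powr_numeral)
  then have num: "real n * (c powr (1 - a) * K) = t * c\<^sup>2"
    unfolding t_def using c0 by (simp add: field_simps)
  have "real n * (c powr (1 - a) * K) / (c - real n * (K / c powr a))\<^sup>2 = t / (1 - t)\<^sup>2"
    unfolding num tau using c0 by (simp add: power_mult_distrib)
  also have "\<dots> \<le> (p / 4) / (3 / 4)\<^sup>2"
  proof (rule frac_le)
    show "(3 / 4)\<^sup>2 \<le> (1 - t)\<^sup>2" using t p by (intro power_mono) auto
  qed (use t in auto)
  also have "\<dots> \<le> p" using p by (simp add: power2_eq_square)
  finally show "n * (c powr (1 - a) * K) / (c - n * (K / c powr a))\<^sup>2 \<le> p" .
qed

lemma measurable_sigma_if_preimages:
  assumes "{f -` A \<inter> \<Omega> | A. A \<in> sets borel} \<subseteq> G" "G \<subseteq> Pow \<Omega>"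
  shows "f \<in> measurable (sigma \<Omega> G) (borel :: 'b::topological_space measure)"
proof (rule measurableI)
  fix A :: "'b set" assume "A \<in> sets borel"
  then have "f -` A \<inter> \<Omega> \<in> G" using assms(1) by auto
  then show "f -` A \<inter> space (sigma \<Omega> G) \<in> sets (sigma \<Omega> G)"
    using assms(2) by (simp add: sets_measure_of space_measure_of_conv)
qed simp

lemma integral_comp_eq_if_distr_eq:
  fixes f :: "'b \<Rightarrow> real"
  assumes "distr M N U = distr M N V" "U \<in> measurable M N" "V \<in> measurable M N"
    "f \<in> borel_measurable N"
  shows "(\<integral>\<omega>. f (U \<omega>) \<partial>M) = (\<integral>\<omega>. f (V \<omega>) \<partial>M)"
proof -
  have "(\<integral>\<omega>. f (U \<omega>) \<partial>M) = (\<integral>x. f x \<partial>distr M N U)"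
    using assms(2,4) by (rule integral_distr[symmetric])
  also have "\<dots> = (\<integral>x. f x \<partial>distr M N V)"
    by (simp only: assms(1))
  also have "\<dots> = (\<integral>\<omega>. f (V \<omega>) \<partial>M)"
    using assms(3,4) by (rule integral_distr)
  finally show ?thesis .
qed

lemma nn_integral_comp_eq_if_distr_eq:
  assumes "distr M N U = distr M N V" "U \<in> measurable M N" "V \<in> measurable M N"
    "f \<in> borel_measurable N"
  shows "(\<integral>\<^sup>+\<omega>. f (U \<omega>) \<partial>M) = (\<integral>\<^sup>+\<omega>. f (V \<omega>) \<partial>M)"
proof -
  have "(\<integral>\<^sup>+\<omega>. f (U \<omega>) \<partial>M) = (\<integral>\<^sup>+x. f x \<partial>distr M N U)"
    using assms(2,4) by (simp add: nn_integral_distr)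
  also have "\<dots> = (\<integral>\<^sup>+x. f x \<partial>distr M N V)"
    by (simp only: assms(1))
  also have "\<dots> = (\<integral>\<^sup>+\<omega>. f (V \<omega>) \<partial>M)"
    using assms(3,4) by (simp add: nn_integral_distr)
  finally show ?thesis .
qed

lemma integrable_integral_le_if_nn_integral_le:
  fixes f :: "'a \<Rightarrow> real"
  assumes "f \<in> borel_measurable M" "\<And>x. f x \<ge> 0" "(\<integral>\<^sup>+x. ennreal (f x) \<partial>M) \<le> ennreal L" "L \<ge> 0"
  shows "integrable M f" "(\<integral>x. f x \<partial>M) \<le> L"
proof -
  have "(\<integral>\<^sup>+x. ennreal (f x) \<partial>M) < \<infinity>" using assms(3) by (simp add: le_less_trans)
  then show "integrable M f" using assms(1,2) by (intro integrableI_nonneg) auto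
  have "(\<integral>x. f x \<partial>M) = enn2real (\<integral>\<^sup>+x. ennreal (f x) \<partial>M)"
    using assms(1,2) by (intro integral_eq_nn_integral) auto
  also have "\<dots> \<le> L" using assms(3,4) enn2real_mono[OF assms(3)] by simp
  finally show "(\<integral>x. f x \<partial>M) \<le> L" .
qed

lemma (in finite_measure) integrable_power2_if_integrable_abs_powr:
  fixes U :: "'a \<Rightarrow> real"
  assumes "U \<in> borel_measurable M" "integrable M (\<lambda>\<omega>. \<bar>U \<omega>\<bar> powr q)" "q \<ge> 2"
  shows "integrable M U" "integrable M (\<lambda>\<omega>. (U \<omega>)\<^sup>2)"
proof -
  have majorant: "integrable M (\<lambda>\<omega>. 2 + \<bar>U \<omega>\<bar> powr q)" using assms(2) by simp
  show "integrable M U"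
    using assms abs_le_two_add_abs_powr[OF assms(3)]
    by (intro Bochner_Integration.integrable_bound[OF majorant] AE_I2) (auto intro: order_trans)
  have "(U \<omega>)\<^sup>2 \<le> 2 + \<bar>U \<omega>\<bar> powr q" for \<omega>
    using power2_le_one_add_abs_powr[OF assms(3), of "U \<omega>"] by linarith
  then show "integrable M (\<lambda>\<omega>. (U \<omega>)\<^sup>2)"
    using assms by (intro Bochner_Integration.integrable_bound[OF majorant] AE_I2) auto
qed

lemma integral_square_sum_orthogonal:
  fixes D :: "'i \<Rightarrow> 'a \<Rightarrow> real"
  assumes "finite I"
    and int: "\<And>i j. i \<in> I \<Longrightarrow> j \<in> I \<Longrightarrow> integrable M (\<lambda>\<omega>. D i \<omega> * D j \<omega>)"
    and orth: "\<And>i j. i \<in> I \<Longrightarrow> j \<in> I \<Longrightarrow> i \<noteq> j \<Longrightarrow> (\<integral>\<omega>. D i \<omega> * D j \<omega> \<partial>M) = 0"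
  shows "(\<integral>\<omega>. (\<Sum>i\<in>I. D i \<omega>)\<^sup>2 \<partial>M) = (\<Sum>i\<in>I. \<integral>\<omega>. (D i \<omega>)\<^sup>2 \<partial>M)"
proof -
  have row: "(\<Sum>j\<in>I. \<integral>\<omega>. D i \<omega> * D j \<omega> \<partial>M) = (\<integral>\<omega>. (D i \<omega>)\<^sup>2 \<partial>M)" if "i \<in> I" for i
  proof -
    have "(\<Sum>j\<in>I - {i}. \<integral>\<omega>. D i \<omega> * D j \<omega> \<partial>M) = 0"
      using that orth by (intro sum.neutral) auto
    then show ?thesis
      using that assms(1) by (simp add: sum.remove[of _ i] power2_eq_square)
  qed
  have "(\<integral>\<omega>. (\<Sum>i\<in>I. D i \<omega>)\<^sup>2 \<partial>M) = (\<integral>\<omega>. (\<Sum>i\<in>I. \<Sum>j\<in>I. D i \<omega> * D j \<omega>) \<partial>M)"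
    by (simp add: power2_eq_square sum_product)
  also have "\<dots> = (\<Sum>i\<in>I. \<Sum>j\<in>I. \<integral>\<omega>. D i \<omega> * D j \<omega> \<partial>M)"
    using int by (simp add: Bochner_Integration.integral_sum Bochner_Integration.integrable_sum)
  also have "\<dots> = (\<Sum>i\<in>I. \<integral>\<omega>. (D i \<omega>)\<^sup>2 \<partial>M)"
    using row by simp
  finally show ?thesis .
qed

lemma (in prob_space) integral_indep_var_iterated:
  fixes Y V :: "'a \<Rightarrow> 'b" and g :: "'b \<Rightarrow> 'b \<Rightarrow> real"
  assumes ind: "indep_var N Y N' V"
    and g[measurable]: "case_prod g \<in> borel_measurable (N \<Otimes>\<^sub>M N')"
    and bnd: "\<And>y v. \<bar>g y v\<bar> \<le> B"
  shows "(\<integral>\<omega>. g (Y \<omega>) (V \<omega>) \<partial>M) = (\<integral>\<omega>. (\<integral>\<omega>'. g (Y \<omega>) (V \<omega>') \<partial>M) \<partial>M)"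
proof -
  have Y[measurable]: "Y \<in> measurable M N" and V[measurable]: "V \<in> measurable M N'"
    and joint: "distr M N Y \<Otimes>\<^sub>M distr M N' V = distr M (N \<Otimes>\<^sub>M N') (\<lambda>x. (Y x, V x))"
    using ind unfolding indep_var_distribution_eq by auto
  interpret DY: prob_space "distr M N Y" by (rule prob_space_distr) simp
  interpret DV: prob_space "distr M N' V" by (rule prob_space_distr) simp
  interpret DYV: pair_prob_space "distr M N Y" "distr M N' V" ..
  have "integrable (distr M N Y \<Otimes>\<^sub>M distr M N' V) (case_prod g)"
    using bnd by (intro DYV.P.integrable_const_bound[where B=B]) auto
  note fubini = DYV.integral_fst'[OF this]
  have "(\<integral>\<omega>. g (Y \<omega>) (V \<omega>) \<partial>M) = integral\<^sup>L (distr M (N \<Otimes>\<^sub>M N') (\<lambda>x. (Y x, V x))) (case_prod g)"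
    by (subst integral_distr) auto
  also have "\<dots> = (\<integral>y. (\<integral>v. g y v \<partial>distr M N' V) \<partial>distr M N Y)"
    using fubini by (simp add: joint)
  also have "\<dots> = (\<integral>y. (\<integral>\<omega>'. g y (V \<omega>') \<partial>M) \<partial>distr M N Y)"
    by (intro Bochner_Integration.integral_cong refl) (auto simp: integral_distr)
  also have "\<dots> = (\<integral>\<omega>. (\<integral>\<omega>'. g (Y \<omega>) (V \<omega>') \<partial>M) \<partial>M)"
    by (subst integral_distr) auto
  finally show ?thesis .
qed

lemma (in prob_space) prob_INT_vimage_indep_vars:
  assumes "indep_vars N X I" "finite K" "K \<subseteq> I" "\<And>k. k \<in> K \<Longrightarrow> B k \<in> sets (N k)"
  shows "prob (space M \<inter> (\<Inter>k\<in>K. X k -` B k)) = (\<Prod>k\<in>K. prob (X k -` B k \<inter> space M))"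
proof (cases "K = {}")
  case True
  then show ?thesis by (simp add: prob_space)
next
  case False
  then have "space M \<inter> (\<Inter>k\<in>K. X k -` B k) = (\<Inter>k\<in>K. X k -` B k \<inter> space M)" by auto
  then show ?thesis by (simp only:) (rule indep_varsD[OF assms(1) False assms(2-4)])
qed

lemma sets_PiM_cylinder:
  assumes "finite K" "K \<subseteq> I" "\<And>k. k \<in> K \<Longrightarrow> B k \<in> sets (N k)"
  shows "{f \<in> space (PiM I N). \<forall>k\<in>K. f k \<in> B k} \<in> sets (PiM I N)"
proof (rule sets.sets_Collect_finite_All[OF _ assms(1)])
  fix k assume "k \<in> K"
  then have "(\<lambda>f. f k) -` B k \<inter> space (PiM I N) \<in> sets (PiM I N)"
    using assms by (intro measurable_sets[OF measurable_component_singleton]) auto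
  then show "{f \<in> space (PiM I N). f k \<in> B k} \<in> sets (PiM I N)"
    by (simp add: Int_def conj_commute)
qed

lemma (in prob_space) vimage_restrict_cylinder:
  assumes "indep_vars N X I" "K \<subseteq> I"
  shows "(\<lambda>\<omega>. \<lambda>i\<in>I. X i \<omega>) -` {f \<in> space (PiM I N). \<forall>k\<in>K. f k \<in> B k} \<inter> space M
           = space M \<inter> (\<Inter>k\<in>K. X k -` B k)"
  using assms measurable_space[of "X _" M "N _"] by (auto simp: space_PiM indep_vars_def2)

lemma (in prob_space) prob_Int_cylinder_events:
  fixes X Y :: "'i \<Rightarrow> 'a \<Rightarrow> 'b"
  assumes X: "indep_vars N X I" and Y: "indep_vars N' Y J"
    and XY: "indep_var (PiM I N) (\<lambda>\<omega>. \<lambda>i\<in>I. X i \<omega>) (PiM J N') (\<lambda>\<omega>. \<lambda>j\<in>J. Y j \<omega>)"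
    and K: "finite K1" "K1 \<subseteq> I" "finite K2" "K2 \<subseteq> J"
    and B: "\<And>k. k \<in> K1 \<Longrightarrow> B1 k \<in> sets (N k)" "\<And>k. k \<in> K2 \<Longrightarrow> B2 k \<in> sets (N' k)"
  shows "prob ((space M \<inter> (\<Inter>k\<in>K1. X k -` B1 k)) \<inter> (space M \<inter> (\<Inter>k\<in>K2. Y k -` B2 k)))
       = prob (space M \<inter> (\<Inter>k\<in>K1. X k -` B1 k)) * prob (space M \<inter> (\<Inter>k\<in>K2. Y k -` B2 k))"
proof -
  let ?F = "\<lambda>\<omega>. \<lambda>i\<in>I. X i \<omega>" and ?G = "\<lambda>\<omega>. \<lambda>j\<in>J. Y j \<omega>"
  let ?C1 = "{f \<in> space (PiM I N). \<forall>k\<in>K1. f k \<in> B1 k}"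
  let ?C2 = "{f \<in> space (PiM J N'). \<forall>k\<in>K2. f k \<in> B2 k}"
  have "(\<lambda>\<omega>. (?F \<omega>, ?G \<omega>)) -` (?C1 \<times> ?C2) \<inter> space M = (?F -` ?C1 \<inter> space M) \<inter> (?G -` ?C2 \<inter> space M)"
    by blast
  then show ?thesis
    using indep_varD[OF XY sets_PiM_cylinder[OF K(1,2) B(1)] sets_PiM_cylinder[OF K(3,4) B(2)]]
    by (simp only: vimage_restrict_cylinder[OF X K(2)] vimage_restrict_cylinder[OF Y K(4)])
qed

lemma (in prob_space) indep_vars_case_sum:
  fixes X Y :: "'i \<Rightarrow> 'a \<Rightarrow> 'b"
  assumes X: "indep_vars N X I" and Y: "indep_vars N' Y J"
    and XY: "indep_var (PiM I N) (\<lambda>\<omega>. \<lambda>i\<in>I. X i \<omega>) (PiM J N') (\<lambda>\<omega>. \<lambda>j\<in>J. Y j \<omega>)"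
  shows "indep_vars (case_sum N N') (case_sum X Y) (Inl ` I \<union> Inr ` J)"
proof -
  let ?Z = "case_sum X Y" and ?N = "case_sum N N'"
  have rv: "\<forall>k\<in>Inl ` I \<union> Inr ` J. random_variable (?N k) (?Z k)"
    using X Y by (auto simp: indep_vars_def2)
  have "prob (\<Inter>k\<in>K. A k) = (\<Prod>k\<in>K. prob (A k))"
    if K: "K \<subseteq> Inl ` I \<union> Inr ` J" "K \<noteq> {}" "finite K"
      and A: "A \<in> (\<Pi> k\<in>K. {?Z k -` B \<inter> space M | B. B \<in> sets (?N k)})" for K A
  proof -
    obtain B where B: "\<And>k. k \<in> K \<Longrightarrow> B k \<in> sets (?N k) \<and> A k = ?Z k -` B k \<inter> space M"
      using A by (simp add: Pi_iff) metis
    define K1 where "K1 = Inl -` K"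
    define K2 where "K2 = Inr -` K"
    have K_eq: "K = Inl ` K1 \<union> Inr ` K2"
    proof (rule set_eqI)
      show "k \<in> K \<longleftrightarrow> k \<in> Inl ` K1 \<union> Inr ` K2" for k by (cases k) (auto simp: K1_def K2_def)
    qed
    have fin: "finite K1" "finite K2"
      using K(3) unfolding K1_def K2_def by (auto intro: finite_vimageI)
    have sub: "K1 \<subseteq> I" "K2 \<subseteq> J" using K(1) by (auto simp: K1_def K2_def)
    have B1: "B (Inl k) \<in> sets (N k)" "A (Inl k) = X k -` B (Inl k) \<inter> space M"
      if "k \<in> K1" for k using B that by (force simp: K1_def)+
    have B2: "B (Inr k) \<in> sets (N' k)" "A (Inr k) = Y k -` B (Inr k) \<inter> space M"
      if "k \<in> K2" for k using B that by (force simp: K2_def)+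
    define E1 where "E1 = space M \<inter> (\<Inter>k\<in>K1. X k -` B (Inl k))"
    define E2 where "E2 = space M \<inter> (\<Inter>k\<in>K2. Y k -` B (Inr k))"
    have "(\<Inter>k\<in>K. A k) = (\<Inter>k\<in>K1. A (Inl k)) \<inter> (\<Inter>k\<in>K2. A (Inr k))"
      unfolding K_eq by (simp add: INT_Un image_image)
    also have "\<dots> = E1 \<inter> E2"
      using K(2) unfolding K_eq E1_def E2_def by (auto simp: B1(2) B2(2))
    finally have "(\<Inter>k\<in>K. A k) = E1 \<inter> E2" .
    moreover have "prob (E1 \<inter> E2) = prob E1 * prob E2"
      unfolding E1_def E2_def
      by (rule prob_Int_cylinder_events[OF X Y XY fin(1) sub(1) fin(2) sub(2) B1(1) B2(1)])
    moreover have "prob E1 = (\<Prod>k\<in>K1. prob (A (Inl k)))"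
      using prob_INT_vimage_indep_vars[OF X fin(1) sub(1) B1(1)] B1(2) by (simp add: E1_def)
    moreover have "prob E2 = (\<Prod>k\<in>K2. prob (A (Inr k)))"
      using prob_INT_vimage_indep_vars[OF Y fin(2) sub(2) B2(1)] B2(2) by (simp add: E2_def)
    moreover have "(\<Prod>k\<in>K. prob (A k)) = (\<Prod>k\<in>K1. prob (A (Inl k))) * (\<Prod>k\<in>K2. prob (A (Inr k)))"
      unfolding K_eq using fin by (subst prod.union_disjoint) (auto simp: prod.reindex)
    ultimately show ?thesis by simp
  qed
  then show ?thesis
    unfolding indep_vars_def2 indep_sets_def using rv by (auto intro: measurable_sets)
qed

lemma (in prob_space) moments_if_distr_eq:
  fixes U V :: "'a \<Rightarrow> real"
  assumes [measurable]: "U \<in> borel_measurable M" "V \<in> borel_measurable M"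
    and same_distr: "distr M borel U = distr M borel V"
    and moment: "(\<integral>\<^sup>+\<omega>. ennreal (\<bar>V \<omega>\<bar> powr q) \<partial>M) \<le> ennreal L" and "L \<ge> 0" and q: "q \<ge> 2"
  shows "integrable M (\<lambda>\<omega>. \<bar>U \<omega>\<bar> powr q)" "(\<integral>\<omega>. \<bar>U \<omega>\<bar> powr q \<partial>M) \<le> L"
    "integrable M U" "integrable M (\<lambda>\<omega>. (U \<omega>)\<^sup>2)"
    "(\<integral>\<omega>. U \<omega> \<partial>M) = (\<integral>\<omega>. V \<omega> \<partial>M)" "(\<integral>\<omega>. (U \<omega>)\<^sup>2 \<partial>M) = (\<integral>\<omega>. (V \<omega>)\<^sup>2 \<partial>M)"
proof -
  have "(\<integral>\<^sup>+\<omega>. ennreal (\<bar>U \<omega>\<bar> powr q) \<partial>M) = (\<integral>\<^sup>+\<omega>. ennreal (\<bar>V \<omega>\<bar> powr q) \<partial>M)"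
    by (rule nn_integral_comp_eq_if_distr_eq[OF same_distr]) auto
  then have "(\<integral>\<^sup>+\<omega>. ennreal (\<bar>U \<omega>\<bar> powr q) \<partial>M) \<le> ennreal L"
    using moment by simp
  note U_moment = integrable_integral_le_if_nn_integral_le[OF _ _ this \<open>L \<ge> 0\<close>]
  show U_integrable: "integrable M (\<lambda>\<omega>. \<bar>U \<omega>\<bar> powr q)" and "(\<integral>\<omega>. \<bar>U \<omega>\<bar> powr q \<partial>M) \<le> L"
    by (rule U_moment; simp)+
  show "integrable M U" "integrable M (\<lambda>\<omega>. (U \<omega>)\<^sup>2)"
    by (rule integrable_power2_if_integrable_abs_powr[OF _ U_integrable q]; simp)+
  show "(\<integral>\<omega>. U \<omega> \<partial>M) = (\<integral>\<omega>. V \<omega> \<partial>M)" "(\<integral>\<omega>. (U \<omega>)\<^sup>2 \<partial>M) = (\<integral>\<omega>. (V \<omega>)\<^sup>2 \<partial>M)"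
    by (rule integral_comp_eq_if_distr_eq[OF same_distr]; simp)+
qed

lemma integral_le_upexp: "P \<in> Ps \<Longrightarrow> ereal (\<integral>x. f x \<partial>P) \<le> upexp Ps f"
  unfolding upexp_def by (rule SUP_upper)

lemma lower_upexp_le_integral:
  assumes "P \<in> Ps" "- upexp Ps (\<lambda>x. - f x) = ereal a"
  shows "a \<le> (\<integral>x. f x \<partial>P)"
  using integral_le_upexp[OF assms(1), of "\<lambda>x. - f x"] assms(2)
  by (simp add: ereal_uminus_eq_reorder)

lemma integral_eq_0_if_upexp_eq_0:
  assumes "P \<in> Ps" "upexp Ps f = 0" "upexp Ps (\<lambda>x. - f x) = 0"
  shows "(\<integral>x. f x \<partial>P) = 0"
  using integral_le_upexp[OF assms(1), of f] integral_le_upexp[OF assms(1), of "\<lambda>x. - f x"] assms(2,3)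
  by simp

lemma nn_integral_le_upexp_nn:
  assumes "P \<in> Ps" "upexp_nn Ps f < \<infinity>"
  shows "(\<integral>\<^sup>+x. ennreal (f x) \<partial>P) \<le> ennreal (enn2real (upexp_nn Ps f))"
proof -
  have "(\<integral>\<^sup>+x. ennreal (f x) \<partial>P) \<le> upexp_nn Ps f"
    unfolding upexp_nn_def by (rule SUP_upper[OF assms(1)])
  also have "\<dots> = ennreal (enn2real (upexp_nn Ps f))" using assms(2) by simp
  finally show ?thesis .
qed

lemma Sigma_adm_measurable:
  "X \<in> Sigma_adm M eps eta n zl zu \<Longrightarrow> 1 \<le> i \<Longrightarrow> i \<le> n
    \<Longrightarrow> X i \<in> borel_measurable (filt M eps eta (i - 1))"
  by (simp add: Sigma_adm_def)

lemma Sigma_adm_bounds: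
  "X \<in> Sigma_adm M eps eta n zl zu \<Longrightarrow> 1 \<le> i \<Longrightarrow> i \<le> n \<Longrightarrow> \<omega> \<in> space M
    \<Longrightarrow> zl \<le> X i \<omega> \<and> X i \<omega> \<le> zu"
  by (simp add: Sigma_adm_def)

section \<open>The noise filtration\<close>

locale fading_channel = prob_space P for P :: "'a measure" +
  fixes eps eta :: "nat \<Rightarrow> 'a \<Rightarrow> real"
  assumes eps_measurable: "\<And>i. i \<ge> 1 \<Longrightarrow> eps i \<in> borel_measurable P"
    and eta_measurable: "\<And>i. i \<ge> 1 \<Longrightarrow> eta i \<in> borel_measurable P"
    and indep_eps: "indep_vars (\<lambda>_. borel) eps {1..}"
    and indep_eta: "indep_vars (\<lambda>_. borel) eta {1..}"
    and indep_eps_eta: "indep_var (PiM {1..} (\<lambda>_. borel)) (\<lambda>\<omega>. \<lambda>i\<in>{1..}. eps i \<omega>)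
                          (PiM {1..} (\<lambda>_. borel)) (\<lambda>\<omega>. \<lambda>i\<in>{1..}. eta i \<omega>)"
begin

text \<open>The noise variables \<open>eps i\<close> and \<open>eta i\<close> are indexed by \<open>Inl i\<close> and \<open>Inr i\<close>;
  \<open>past k\<close> indexes those generating \<open>filt P eps eta k\<close>.\<close>
definition past :: "nat \<Rightarrow> (nat + nat) set" where
  "past k = Inl ` {1..k} \<union> Inr ` {1..k}"

definition noise_sets :: "nat + nat \<Rightarrow> 'a set set" where
  "noise_sets k = {case_sum eps eta k -` A \<inter> space P | A. A \<in> sets borel}"

lemma indep_sets_noise: "indep_sets noise_sets (Inl ` {1..} \<union> Inr ` {1..})"
proof -
  have "case_sum (\<lambda>_. borel) (\<lambda>_. borel) = (\<lambda>_. borel :: real measure)"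
    by (simp add: fun_eq_iff split: sum.split)
  then show ?thesis
    using indep_vars_case_sum[OF indep_eps indep_eta indep_eps_eta]
    unfolding indep_vars_def2 noise_sets_def by simp
qed

lemma Int_stable_noise_sets: "Int_stable (noise_sets k)"
  unfolding Int_stable_def
proof (intro ballI)
  fix S T assume "S \<in> noise_sets k" "T \<in> noise_sets k"
  then obtain A B :: "real set" where "A \<in> sets borel" "B \<in> sets borel"
    "S = case_sum eps eta k -` A \<inter> space P" "T = case_sum eps eta k -` B \<inter> space P"
    by (auto simp: noise_sets_def)
  then show "S \<inter> T \<in> noise_sets k"
    unfolding noise_sets_def by (intro CollectI exI[of _ "A \<inter> B"]) auto
qed

lemma noise_sets_Pow: "noise_sets k \<subseteq> Pow (space P)"
  by (auto simp: noise_sets_def)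

lemma noise_sets_events: "k \<in> past j \<Longrightarrow> noise_sets k \<subseteq> events"
  using eps_measurable eta_measurable by (auto simp: noise_sets_def past_def)

lemma filt_eq_sigma_noise: "filt P eps eta k = sigma (space P) (\<Union>i\<in>past k. noise_sets i)"
proof -
  have "(\<Union>i\<in>past k. noise_sets i)
      = (\<Union>j\<in>{1..k}. {eps j -` B \<inter> space P | B. B \<in> sets borel} \<union> {eta j -` B \<inter> space P | B. B \<in> sets borel})"
    by (auto simp: past_def noise_sets_def)
  then show ?thesis by (simp add: filt_def)
qed

lemma space_filt[simp]: "space (filt P eps eta k) = space P"
  by (simp add: filt_def space_measure_of_conv)

lemma sets_filt: "sets (filt P eps eta k) = sigma_sets (space P) (\<Union>i\<in>past k. noise_sets i)"
  unfolding filt_eq_sigma_noise using noise_sets_Pow by (intro sets_measure_of) auto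

lemma subalgebra_filt: "subalgebra P (filt P eps eta k)"
  unfolding subalgebra_def sets_filt using noise_sets_events
  by (auto intro!: sets.sigma_sets_subset)

lemma subalgebra_filt_mono: "k \<le> k' \<Longrightarrow> subalgebra (filt P eps eta k') (filt P eps eta k)"
  unfolding subalgebra_def sets_filt past_def by (intro conjI sigma_sets_mono' UN_mono) auto

lemma noise_measurable_filt:
  assumes "i \<in> past k"
  shows "case_sum eps eta i \<in> borel_measurable (filt P eps eta k)"
  unfolding filt_eq_sigma_noise
  by (rule measurable_sigma_if_preimages) (use assms noise_sets_Pow in \<open>auto simp: noise_sets_def\<close>)

lemma eps_measurable_filt: "1 \<le> i \<Longrightarrow> i \<le> k \<Longrightarrow> eps i \<in> borel_measurable (filt P eps eta k)"
  using noise_measurable_filt[of "Inl i" k] by (simp add: past_def)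

lemma eta_measurable_filt: "1 \<le> i \<Longrightarrow> i \<le> k \<Longrightarrow> eta i \<in> borel_measurable (filt P eps eta k)"
  using noise_measurable_filt[of "Inr i" k] by (simp add: past_def)

lemma indep_var_filt_noise:
  assumes j: "j \<ge> 1" and Y: "Y \<in> measurable (filt P eps eta (j - 1)) N"
  shows "indep_var N Y borel (\<lambda>\<omega>. (eps j \<omega>, eta j \<omega>))"
proof -
  define I where "I = (\<lambda>b. if b then past (j - 1) else {Inl j, Inr j})"
  have "indep_sets noise_sets (\<Union>b. I b)"
    using indep_sets_noise by (rule indep_sets_mono_index[rotated]) (use j in \<open>auto simp: I_def past_def\<close>)
  then have indep: "indep_sets (\<lambda>b. sigma_sets (space P) (\<Union>i\<in>I b. noise_sets i)) UNIV"
    by (rule indep_sets_collect_sigma) (auto simp: Int_stable_noise_sets disjoint_family_on_def I_def past_def)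
  have now_measurable: "(\<lambda>\<omega>. (eps j \<omega>, eta j \<omega>)) \<in> borel_measurable (sigma (space P) (\<Union>i\<in>I False. noise_sets i))"
    unfolding borel_prod[symmetric] using noise_sets_Pow
    by (intro measurable_Pair measurable_sigma_if_preimages) (auto simp: I_def noise_sets_def)
  have "(\<lambda>\<omega>. (eps j \<omega>, eta j \<omega>)) \<in> borel_measurable P"
    using eps_measurable eta_measurable j unfolding borel_prod[symmetric] by (intro measurable_Pair) auto
  moreover have "Y \<in> measurable P N"
    using measurable_from_subalg[OF subalgebra_filt Y] .
  moreover have "indep_sets (\<lambda>b. {case_bool Y (\<lambda>\<omega>. (eps j \<omega>, eta j \<omega>)) b -` A \<inter> space P |A.
      A \<in> sets (case_bool N borel b)}) UNIV"
  proof (rule indep_sets_mono_sets[OF indep], cases)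
    fix b :: bool assume b
    then show "{case_bool Y (\<lambda>\<omega>. (eps j \<omega>, eta j \<omega>)) b -` A \<inter> space P |A. A \<in> sets (case_bool N borel b)}
        \<subseteq> sigma_sets (space P) (\<Union>i\<in>I b. noise_sets i)"
      using measurable_sets[OF Y] by (auto simp: sets_filt I_def)
  next
    fix b :: bool assume "\<not> b"
    then show "{case_bool Y (\<lambda>\<omega>. (eps j \<omega>, eta j \<omega>)) b -` A \<inter> space P |A. A \<in> sets (case_bool N borel b)}
        \<subseteq> sigma_sets (space P) (\<Union>i\<in>I b. noise_sets i)"
      using measurable_sets[OF now_measurable] noise_sets_Pow
      by (auto simp: sets_measure_of space_measure_of_conv I_def)
  qed
  ultimately show ?thesis
    unfolding indep_var_def indep_vars_def2 by (auto split: bool.split)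
qed

end

section \<open>Clipped received energies\<close>

context fading_channel
begin

lemma Sigma_adm_measurable_filt:
  assumes "X \<in> Sigma_adm P eps eta n zl zu" "1 \<le> i" "i \<le> n" "i \<le> k"
  shows "X i \<in> borel_measurable (filt P eps eta k)"
  using measurable_from_subalg[OF subalgebra_filt_mono Sigma_adm_measurable[OF assms(1-3)]] assms(4)
  by simp

definition clipped_energy :: "real \<Rightarrow> nat \<Rightarrow> real \<Rightarrow> 'a \<Rightarrow> real" where
  "clipped_energy c i x \<omega> = min ((eps i \<omega> * x + eta i \<omega>)\<^sup>2) c"

definition mean_clipped_energy :: "real \<Rightarrow> nat \<Rightarrow> real \<Rightarrow> real" where
  "mean_clipped_energy c i x = (\<integral>\<omega>. clipped_energy c i x \<omega> \<partial>P)"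

definition clipped_innovation :: "(nat \<Rightarrow> 'a \<Rightarrow> real) \<Rightarrow> real \<Rightarrow> nat \<Rightarrow> 'a \<Rightarrow> real" where
  "clipped_innovation X c i \<omega> = clipped_energy c i (X i \<omega>) \<omega> - mean_clipped_energy c i (X i \<omega>)"

lemma clipped_energy_bounds: "c \<ge> 0 \<Longrightarrow> 0 \<le> clipped_energy c i x \<omega> \<and> clipped_energy c i x \<omega> \<le> c"
  by (simp add: clipped_energy_def)

lemma clipped_energy_measurable:
  assumes "1 \<le> i"
  shows "case_prod (clipped_energy c i) \<in> borel_measurable (borel \<Otimes>\<^sub>M P)"
proof -
  have [measurable]: "eps i \<in> borel_measurable P" "eta i \<in> borel_measurable P"
    using eps_measurable eta_measurable assms by auto
  show ?thesis unfolding clipped_energy_def by measurable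
qed

lemma integrable_clipped_energy: "1 \<le> i \<Longrightarrow> c \<ge> 0 \<Longrightarrow> integrable P (clipped_energy c i x)"
  using clipped_energy_bounds measurable_Pair2[OF clipped_energy_measurable]
  by (intro integrable_const_bound[where B=c]) auto

lemma mean_clipped_energy_bounds:
  "1 \<le> i \<Longrightarrow> c \<ge> 0 \<Longrightarrow> 0 \<le> mean_clipped_energy c i x \<and> mean_clipped_energy c i x \<le> c"
  using clipped_energy_bounds integrable_clipped_energy unfolding mean_clipped_energy_def
  by (auto intro!: integral_nonneg_AE integral_le_const)

lemma mean_clipped_energy_measurable[measurable]:
  "1 \<le> i \<Longrightarrow> mean_clipped_energy c i \<in> borel_measurable borel"
  unfolding mean_clipped_energy_def
  by (rule borel_measurable_lebesgue_integral[OF clipped_energy_measurable])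

lemma abs_min_sub_mean_clipped_energy_le:
  assumes "1 \<le> i" "c \<ge> 0"
  shows "\<bar>min (u\<^sup>2) c - mean_clipped_energy c i y\<bar> \<le> c"
proof -
  have "\<bar>min v c - m\<bar> \<le> c" if "0 \<le> v" "0 \<le> m" "m \<le> c" for v m :: real
    using that by (auto simp: abs_le_iff min_def)
  then show ?thesis using mean_clipped_energy_bounds[OF assms, of y] by simp
qed

lemma abs_clipped_innovation_le: "1 \<le> i \<Longrightarrow> c \<ge> 0 \<Longrightarrow> \<bar>clipped_innovation X c i \<omega>\<bar> \<le> c"
  unfolding clipped_innovation_def clipped_energy_def by (rule abs_min_sub_mean_clipped_energy_le)

lemma clipped_innovation_measurable_filt:
  assumes "X \<in> Sigma_adm P eps eta n zl zu" "1 \<le> i" "i \<le> n" "i \<le> k"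
  shows "clipped_innovation X c i \<in> borel_measurable (filt P eps eta k)"
proof -
  have [measurable]: "eps i \<in> borel_measurable (filt P eps eta k)"
    "eta i \<in> borel_measurable (filt P eps eta k)" "X i \<in> borel_measurable (filt P eps eta k)"
    "mean_clipped_energy c i \<in> borel_measurable borel"
    using assms eps_measurable_filt eta_measurable_filt Sigma_adm_measurable_filt by auto
  show ?thesis unfolding clipped_innovation_def clipped_energy_def by measurable
qed

lemma clipped_innovation_measurable:
  "X \<in> Sigma_adm P eps eta n zl zu \<Longrightarrow> 1 \<le> i \<Longrightarrow> i \<le> n \<Longrightarrow> clipped_innovation X c i \<in> borel_measurable P"
  using measurable_from_subalg[OF subalgebra_filt clipped_innovation_measurable_filt] by blast

text \<open>\<open>X j\<close> and the earlier innovations are measurable for \<open>filt P eps eta (j - 1)\<close>, hence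
  independent of \<open>(eps j, eta j)\<close>; integrating out \<open>(eps j, eta j)\<close> first centres the \<open>j\<close>-th
  factor.  The first factor is clipped only to make the integrand globally bounded: on the
  range of the innovation the clipping changes nothing.\<close>
lemma integral_clipped_innovation_mul_eq_0:
  assumes X: "X \<in> Sigma_adm P eps eta n zl zu" and c: "c \<ge> 0" and ij: "1 \<le> i" "i < j" "j \<le> n"
  shows "(\<integral>\<omega>. clipped_innovation X c i \<omega> * clipped_innovation X c j \<omega> \<partial>P) = 0"
proof -
  let ?D = "clipped_innovation X c"
  have j: "1 \<le> j" using ij by simp
  define clip where "clip u = max (- c) (min c u)" for u
  define g where "g y z = clip (fst y) * (min ((fst z * snd y + snd z)\<^sup>2) c
      - mean_clipped_energy c j (snd y))" for y z :: "real \<times> real"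
  have [measurable]: "mean_clipped_energy c j \<in> borel_measurable borel"
    using j by (rule mean_clipped_energy_measurable)
  have "(\<lambda>\<omega>. (?D i \<omega>, X j \<omega>)) \<in> borel_measurable (filt P eps eta (j - 1))"
    unfolding borel_prod[symmetric] using X ij
    by (intro measurable_Pair clipped_innovation_measurable_filt Sigma_adm_measurable) auto
  note indep = indep_var_filt_noise[OF j this]
  have g_measurable: "case_prod g \<in> borel_measurable (borel \<Otimes>\<^sub>M borel)"
    unfolding g_def clip_def borel_prod[symmetric] case_prod_beta' by measurable
  have "\<bar>g y z\<bar> \<le> c * c" for y z
    using c abs_min_sub_mean_clipped_energy_le[OF j c]
    unfolding g_def clip_def abs_mult by (intro mult_mono) auto
  note iterated = integral_indep_var_iterated[OF indep g_measurable this]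
  have "?D i \<omega> * ?D j \<omega> = g (?D i \<omega>, X j \<omega>) (eps j \<omega>, eta j \<omega>)" for \<omega>
    using abs_clipped_innovation_le[OF ij(1) c, of X \<omega>]
    by (simp add: g_def clip_def clipped_innovation_def clipped_energy_def)
  then have "(\<integral>\<omega>. ?D i \<omega> * ?D j \<omega> \<partial>P) = (\<integral>\<omega>. (\<integral>\<omega>'. g (?D i \<omega>, X j \<omega>) (eps j \<omega>', eta j \<omega>') \<partial>P) \<partial>P)"
    using iterated by simp
  also have "\<dots> = 0"
  proof -
    have "(\<integral>\<omega>'. clipped_energy c j x \<omega>' - mean_clipped_energy c j x \<partial>P) = 0" for x
      using integrable_clipped_energy[OF j c]
      by (simp add: Bochner_Integration.integral_diff mean_clipped_energy_def prob_space)
    then have "(\<integral>\<omega>'. g y (eps j \<omega>', eta j \<omega>') \<partial>P) = 0" for y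
      by (simp add: g_def clipped_energy_def)
    then show ?thesis by simp
  qed
  finally show ?thesis .
qed

lemma integral_square_centered_clipped_energy_le:
  assumes "1 \<le> i" "c \<ge> 0"
  shows "(\<integral>\<omega>. (clipped_energy c i x \<omega> - mean_clipped_energy c i x)\<^sup>2 \<partial>P)
      \<le> (\<integral>\<omega>. (clipped_energy c i x \<omega>)\<^sup>2 \<partial>P)"
proof -
  have "integrable P (\<lambda>\<omega>. (clipped_energy c i x \<omega>)\<^sup>2)"
    using clipped_energy_bounds[OF assms(2)] measurable_Pair2[OF clipped_energy_measurable[OF assms(1)]]
      assms(2)
    by (intro integrable_const_bound[where B="c * c"])
       (auto simp: power2_eq_square abs_mult intro!: mult_mono)
  from variance_eq[OF integrable_clipped_energy[OF assms] this]
  show ?thesis unfolding mean_clipped_energy_def by simp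
qed

lemma integral_clipped_innovation_square_le:
  assumes X: "X \<in> Sigma_adm P eps eta n zl zu" and c: "c \<ge> 0" and j: "1 \<le> j" "j \<le> n"
    and second_moment: "\<And>x. zl \<le> x \<Longrightarrow> x \<le> zu \<Longrightarrow> (\<integral>\<omega>. (clipped_energy c j x \<omega>)\<^sup>2 \<partial>P) \<le> B"
  shows "(\<integral>\<omega>. (clipped_innovation X c j \<omega>)\<^sup>2 \<partial>P) \<le> B"
proof -
  define g where "g y z = (min ((fst z * fst y + snd z)\<^sup>2) c - mean_clipped_energy c j (fst y))\<^sup>2"
    for y z :: "real \<times> real"
  have [measurable]: "mean_clipped_energy c j \<in> borel_measurable borel"
    using j(1) by (rule mean_clipped_energy_measurable)
  have "(\<lambda>\<omega>. (X j \<omega>, 0 :: real)) \<in> borel_measurable (filt P eps eta (j - 1))"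
    unfolding borel_prod[symmetric] by (intro measurable_Pair Sigma_adm_measurable[OF X] j) simp
  note indep = indep_var_filt_noise[OF j(1) this]
  have g_measurable: "case_prod g \<in> borel_measurable (borel \<Otimes>\<^sub>M borel)"
    unfolding g_def borel_prod[symmetric] case_prod_beta' by measurable
  have "\<bar>g y z\<bar> \<le> c * c" for y z
    using c abs_min_sub_mean_clipped_energy_le[OF j(1) c]
    unfolding g_def power2_eq_square abs_mult by (intro mult_mono) auto
  note iterated = integral_indep_var_iterated[OF indep g_measurable this]
  have inner: "(\<integral>\<omega>'. g (x, 0) (eps j \<omega>', eta j \<omega>') \<partial>P) \<le> B" if "zl \<le> x" "x \<le> zu" for x
    using integral_square_centered_clipped_energy_le[OF j(1) c, of x] second_moment[OF that]
    by (simp add: g_def clipped_energy_def)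
  obtain \<omega>\<^sub>0 where "\<omega>\<^sub>0 \<in> space P" using not_empty by blast
  then have "(\<integral>\<omega>'. g (X j \<omega>\<^sub>0, 0) (eps j \<omega>', eta j \<omega>') \<partial>P) \<le> B"
    using inner Sigma_adm_bounds[OF X j] by blast
  moreover have "0 \<le> (\<integral>\<omega>'. g (X j \<omega>\<^sub>0, 0) (eps j \<omega>', eta j \<omega>') \<partial>P)"
    by (simp add: g_def)
  ultimately have "0 \<le> B" by linarith
  have "(\<integral>\<omega>. (clipped_innovation X c j \<omega>)\<^sup>2 \<partial>P)
      = (\<integral>\<omega>. (\<integral>\<omega>'. g (X j \<omega>, 0) (eps j \<omega>', eta j \<omega>') \<partial>P) \<partial>P)"
    using iterated by (simp add: g_def clipped_innovation_def clipped_energy_def)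
  also have "\<dots> \<le> B"
  proof (cases "integrable P (\<lambda>\<omega>. \<integral>\<omega>'. g (X j \<omega>, 0) (eps j \<omega>', eta j \<omega>') \<partial>P)")
    case True
    then show ?thesis
      using inner Sigma_adm_bounds[OF X j] by (intro integral_le_const[OF True] AE_I2) auto
  qed (simp add: not_integrable_integral_eq \<open>0 \<le> B\<close>)
  finally show ?thesis .
qed

lemma integral_square_sum_clipped_innovation_le:
  assumes X: "X \<in> Sigma_adm P eps eta n zl zu" and c: "c \<ge> 0"
    and second_moment: "\<And>j. 1 \<le> j \<Longrightarrow> j \<le> n \<Longrightarrow> (\<integral>\<omega>. (clipped_innovation X c j \<omega>)\<^sup>2 \<partial>P) \<le> B"
  shows "(\<integral>\<omega>. (\<Sum>i=1..n. clipped_innovation X c i \<omega>)\<^sup>2 \<partial>P) \<le> n * B"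
proof -
  let ?D = "clipped_innovation X c"
  have "integrable P (\<lambda>\<omega>. ?D i \<omega> * ?D j \<omega>)" if "i \<in> {1..n}" "j \<in> {1..n}" for i j
    using that abs_clipped_innovation_le[OF _ c] clipped_innovation_measurable[OF X] c
    by (intro integrable_const_bound[where B="c * c"]) (auto simp: abs_mult intro!: mult_mono)
  moreover have "(\<integral>\<omega>. ?D i \<omega> * ?D j \<omega> \<partial>P) = 0" if "i \<in> {1..n}" "j \<in> {1..n}" "i \<noteq> j" for i j
  proof (cases "i < j")
    case True
    then show ?thesis using that by (intro integral_clipped_innovation_mul_eq_0[OF X c]) auto
  next
    case False
    then have "(\<integral>\<omega>. ?D j \<omega> * ?D i \<omega> \<partial>P) = 0"
      using that by (intro integral_clipped_innovation_mul_eq_0[OF X c]) auto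
    then show ?thesis by (simp add: mult.commute)
  qed
  ultimately have "(\<integral>\<omega>. (\<Sum>i=1..n. ?D i \<omega>)\<^sup>2 \<partial>P) = (\<Sum>i=1..n. \<integral>\<omega>. (?D i \<omega>)\<^sup>2 \<partial>P)"
    by (intro integral_square_sum_orthogonal) auto
  also have "\<dots> \<le> (\<Sum>i=1..n. B)" using second_moment by (intro sum_mono) auto
  finally show ?thesis by simp
qed

lemma prob_energy_le_clipped:
  assumes X: "X \<in> Sigma_adm P eps eta n zl zu" and c: "c > 0" and gap: "n * b < c"
    and mean_lower: "\<And>i x. 1 \<le> i \<Longrightarrow> zl \<le> x \<Longrightarrow> x \<le> zu \<Longrightarrow> \<mu> - b \<le> mean_clipped_energy c i x"
    and second_moment: "\<And>i x. 1 \<le> i \<Longrightarrow> zl \<le> x \<Longrightarrow> x \<le> zu \<Longrightarrow>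
        (\<integral>\<omega>. (clipped_energy c i x \<omega>)\<^sup>2 \<partial>P) \<le> B"
  shows "prob {\<omega> \<in> space P. (\<Sum>i=1..n. (eps i \<omega> * X i \<omega> + eta i \<omega>)\<^sup>2) \<le> n * \<mu> - c}
          \<le> n * B / (c - n * b)\<^sup>2"
proof -
  define T where "T \<omega> = (\<Sum>i=1..n. clipped_innovation X c i \<omega>)" for \<omega>
  have [measurable]: "T \<in> borel_measurable P"
    unfolding T_def using clipped_innovation_measurable[OF X] by auto
  have T_square: "(\<integral>\<omega>. (T \<omega>)\<^sup>2 \<partial>P) \<le> n * B"
    unfolding T_def using X c second_moment
    by (intro integral_square_sum_clipped_innovation_le integral_clipped_innovation_square_le) auto
  have T_integrable: "integrable P (\<lambda>\<omega>. (T \<omega>)\<^sup>2)"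
    unfolding T_def power2_eq_square sum_product
    using abs_clipped_innovation_le[OF _ less_imp_le[OF c]] clipped_innovation_measurable[OF X] c
    by (intro Bochner_Integration.integrable_sum integrable_const_bound[where B="c * c"])
       (auto simp: abs_mult intro!: mult_mono)
  have "{\<omega> \<in> space P. (\<Sum>i=1..n. (eps i \<omega> * X i \<omega> + eta i \<omega>)\<^sup>2) \<le> n * \<mu> - c}
      \<subseteq> {\<omega> \<in> space P. (c - n * b)\<^sup>2 \<le> (T \<omega>)\<^sup>2}"
  proof safe
    fix \<omega> assume \<omega>: "\<omega> \<in> space P"
      and low: "(\<Sum>i=1..n. (eps i \<omega> * X i \<omega> + eta i \<omega>)\<^sup>2) \<le> n * \<mu> - c"
    have "(\<Sum>i=1..n. clipped_energy c i (X i \<omega>) \<omega>) \<le> (\<Sum>i=1..n. (eps i \<omega> * X i \<omega> + eta i \<omega>)\<^sup>2)"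
      by (intro sum_mono) (simp add: clipped_energy_def)
    moreover have "(\<Sum>i=1..n. clipped_energy c i (X i \<omega>) \<omega>)
        = T \<omega> + (\<Sum>i=1..n. mean_clipped_energy c i (X i \<omega>))"
      by (simp add: T_def clipped_innovation_def sum_subtractf)
    moreover have "(\<Sum>i=1..n. \<mu> - b) \<le> (\<Sum>i=1..n. mean_clipped_energy c i (X i \<omega>))"
      using Sigma_adm_bounds[OF X _ _ \<omega>] by (intro sum_mono mean_lower) auto
    ultimately have "c - n * b \<le> \<bar>T \<omega>\<bar>" using low by (simp add: algebra_simps)
    then show "(c - n * b)\<^sup>2 \<le> (T \<omega>)\<^sup>2"
      using power_mono[of "c - n * b" "\<bar>T \<omega>\<bar>" 2] gap by simp
  qed
  then have "prob {\<omega> \<in> space P. (\<Sum>i=1..n. (eps i \<omega> * X i \<omega> + eta i \<omega>)\<^sup>2) \<le> n * \<mu> - c}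
      \<le> prob {\<omega> \<in> space P. (c - n * b)\<^sup>2 \<le> (T \<omega>)\<^sup>2}"
    by (intro finite_measure_mono) measurable
  also have "\<dots> \<le> (\<integral>\<omega>. (T \<omega>)\<^sup>2 \<partial>P) / (c - n * b)\<^sup>2"
    using gap by (intro integral_Markov_inequality_measure[OF T_integrable, where A="space P"]) auto
  also have "\<dots> \<le> n * B / (c - n * b)\<^sup>2"
    using T_square by (intro divide_right_mono) auto
  finally show ?thesis .
qed

end

section \<open>Moment bounds\<close>

locale fading_channel_moments = fading_channel +
  fixes \<alpha> Le Lt sl nl :: real
  assumes alpha: "0 < \<alpha>" "\<alpha> \<le> 1"
    and eps_identically_distributed: "\<And>i. i \<ge> 1 \<Longrightarrow> distr P borel (eps i) = distr P borel (eps 1)"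
    and eta_identically_distributed: "\<And>i. i \<ge> 1 \<Longrightarrow> distr P borel (eta i) = distr P borel (eta 1)"
    and eps_moment: "(\<integral>\<^sup>+\<omega>. ennreal (\<bar>eps 1 \<omega>\<bar> powr (2 + 2 * \<alpha>)) \<partial>P) \<le> ennreal Le"
    and eta_moment: "(\<integral>\<^sup>+\<omega>. ennreal (\<bar>eta 1 \<omega>\<bar> powr (2 + 2 * \<alpha>)) \<partial>P) \<le> ennreal Lt"
    and moment_bounds_nonneg: "0 \<le> Le" "0 \<le> Lt"
    and eps_second_moment: "sl \<le> (\<integral>\<omega>. (eps 1 \<omega>)\<^sup>2 \<partial>P)"
    and eta_second_moment: "nl \<le> (\<integral>\<omega>. (eta 1 \<omega>)\<^sup>2 \<partial>P)" "0 < nl"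
    and eta_mean: "(\<integral>\<omega>. eta 1 \<omega> \<partial>P) = 0"
begin

lemma eps_moments:
  assumes "1 \<le> i"
  shows "integrable P (\<lambda>\<omega>. \<bar>eps i \<omega>\<bar> powr (2 + 2 * \<alpha>))" "(\<integral>\<omega>. \<bar>eps i \<omega>\<bar> powr (2 + 2 * \<alpha>) \<partial>P) \<le> Le"
    "integrable P (eps i)" "integrable P (\<lambda>\<omega>. (eps i \<omega>)\<^sup>2)" "sl \<le> (\<integral>\<omega>. (eps i \<omega>)\<^sup>2 \<partial>P)"
proof -
  have "2 \<le> 2 + 2 * \<alpha>" using alpha by simp
  note moments = moments_if_distr_eq[OF eps_measurable[OF assms] eps_measurable[OF order.refl]
      eps_identically_distributed[OF assms] eps_moment moment_bounds_nonneg(1) this]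
  show "integrable P (\<lambda>\<omega>. \<bar>eps i \<omega>\<bar> powr (2 + 2 * \<alpha>))" "(\<integral>\<omega>. \<bar>eps i \<omega>\<bar> powr (2 + 2 * \<alpha>) \<partial>P) \<le> Le"
    "integrable P (eps i)" "integrable P (\<lambda>\<omega>. (eps i \<omega>)\<^sup>2)"
    by (fact moments(1-4))+
  show "sl \<le> (\<integral>\<omega>. (eps i \<omega>)\<^sup>2 \<partial>P)" unfolding moments(6) by (fact eps_second_moment)
qed

lemma eta_moments:
  assumes "1 \<le> i"
  shows "integrable P (\<lambda>\<omega>. \<bar>eta i \<omega>\<bar> powr (2 + 2 * \<alpha>))" "(\<integral>\<omega>. \<bar>eta i \<omega>\<bar> powr (2 + 2 * \<alpha>) \<partial>P) \<le> Lt"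
    "integrable P (eta i)" "integrable P (\<lambda>\<omega>. (eta i \<omega>)\<^sup>2)" "nl \<le> (\<integral>\<omega>. (eta i \<omega>)\<^sup>2 \<partial>P)"
    "(\<integral>\<omega>. eta i \<omega> \<partial>P) = 0"
proof -
  have "2 \<le> 2 + 2 * \<alpha>" using alpha by simp
  note moments = moments_if_distr_eq[OF eta_measurable[OF assms] eta_measurable[OF order.refl]
      eta_identically_distributed[OF assms] eta_moment moment_bounds_nonneg(2) this]
  show "integrable P (\<lambda>\<omega>. \<bar>eta i \<omega>\<bar> powr (2 + 2 * \<alpha>))" "(\<integral>\<omega>. \<bar>eta i \<omega>\<bar> powr (2 + 2 * \<alpha>) \<partial>P) \<le> Lt"
    "integrable P (eta i)" "integrable P (\<lambda>\<omega>. (eta i \<omega>)\<^sup>2)"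
    by (fact moments(1-4))+
  show "nl \<le> (\<integral>\<omega>. (eta i \<omega>)\<^sup>2 \<partial>P)" unfolding moments(6) by (fact eta_second_moment)
  show "(\<integral>\<omega>. eta i \<omega> \<partial>P) = 0" unfolding moments(5) by (fact eta_mean)
qed

lemma eta_moment_pos: "0 < Lt"
proof (rule ccontr)
  assume "\<not> 0 < Lt"
  then have "(\<integral>\<omega>. \<bar>eta 1 \<omega>\<bar> powr (2 + 2 * \<alpha>) \<partial>P) = 0"
    using eta_moments(2)[OF order.refl] moment_bounds_nonneg(2) by (simp add: antisym integral_nonneg_AE)
  then have "AE \<omega> in P. \<bar>eta 1 \<omega>\<bar> powr (2 + 2 * \<alpha>) = 0"
    using integral_nonneg_eq_0_iff_AE[OF eta_moments(1)[OF order.refl]] by simp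
  then have "AE \<omega> in P. (eta 1 \<omega>)\<^sup>2 = 0" by (auto elim: AE_mp)
  then have "(\<integral>\<omega>. (eta 1 \<omega>)\<^sup>2 \<partial>P) = 0" by (rule integral_eq_zero_AE)
  then show False using eta_second_moment by simp
qed

lemma received_second_moment:
  assumes i: "1 \<le> i" and x: "0 \<le> zl" "zl \<le> x"
  shows "integrable P (\<lambda>\<omega>. (eps i \<omega> * x + eta i \<omega>)\<^sup>2)"
    "sl * zl\<^sup>2 + nl \<le> (\<integral>\<omega>. (eps i \<omega> * x + eta i \<omega>)\<^sup>2 \<partial>P)"
proof -
  have indep: "indep_var borel (eps i) borel (eta i)"
  proof -
    have "indep_var borel ((\<lambda>f. f i) \<circ> (\<lambda>\<omega>. \<lambda>k\<in>{1..}. eps k \<omega>)) borel ((\<lambda>f. f i) \<circ> (\<lambda>\<omega>. \<lambda>k\<in>{1..}. eta k \<omega>))"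
      using i by (intro indep_var_compose[OF indep_eps_eta] measurable_component_singleton) auto
    moreover have "(\<lambda>f. f i) \<circ> (\<lambda>\<omega>. \<lambda>k\<in>{1..}. eps k \<omega>) = eps i"
      "(\<lambda>f. f i) \<circ> (\<lambda>\<omega>. \<lambda>k\<in>{1..}. eta k \<omega>) = eta i" using i by (auto simp: fun_eq_iff)
    ultimately show ?thesis by simp
  qed
  have cross: "integrable P (\<lambda>\<omega>. eps i \<omega> * eta i \<omega>)" "(\<integral>\<omega>. eps i \<omega> * eta i \<omega> \<partial>P) = 0"
    using indep_var_integrable[OF indep eps_moments(3)[OF i] eta_moments(3)[OF i]]
      indep_var_lebesgue_integral[OF indep eps_moments(3)[OF i] eta_moments(3)[OF i]]
      eta_moments(6)[OF i] by simp_all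
  have expand: "(eps i \<omega> * x + eta i \<omega>)\<^sup>2 = x\<^sup>2 * (eps i \<omega>)\<^sup>2 + 2 * x * (eps i \<omega> * eta i \<omega>) + (eta i \<omega>)\<^sup>2" for \<omega>
    by (simp add: power2_eq_square algebra_simps)
  show "integrable P (\<lambda>\<omega>. (eps i \<omega> * x + eta i \<omega>)\<^sup>2)"
    unfolding expand using eps_moments(4)[OF i] eta_moments(4)[OF i] cross(1) by simp
  have "(\<integral>\<omega>. (eps i \<omega> * x + eta i \<omega>)\<^sup>2 \<partial>P) = x\<^sup>2 * (\<integral>\<omega>. (eps i \<omega>)\<^sup>2 \<partial>P) + (\<integral>\<omega>. (eta i \<omega>)\<^sup>2 \<partial>P)"
    unfolding expand using eps_moments(4)[OF i] eta_moments(4)[OF i] cross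
    by (simp add: Bochner_Integration.integral_add)
  moreover have "sl * zl\<^sup>2 \<le> x\<^sup>2 * (\<integral>\<omega>. (eps i \<omega>)\<^sup>2 \<partial>P)"
  proof -
    have "zl\<^sup>2 * sl \<le> zl\<^sup>2 * (\<integral>\<omega>. (eps i \<omega>)\<^sup>2 \<partial>P)"
      using eps_moments(5)[OF i] by (intro mult_left_mono) auto
    also have "\<dots> \<le> x\<^sup>2 * (\<integral>\<omega>. (eps i \<omega>)\<^sup>2 \<partial>P)"
      using x by (intro mult_right_mono power_mono) auto
    finally show ?thesis by (simp add: mult.commute)
  qed
  ultimately show "sl * zl\<^sup>2 + nl \<le> (\<integral>\<omega>. (eps i \<omega> * x + eta i \<omega>)\<^sup>2 \<partial>P)"
    using eta_moments(5)[OF i] by simp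
qed

definition received_moment_bound :: "real \<Rightarrow> real" where
  "received_moment_bound zu = 2 powr (1 + 2 * \<alpha>) * (zu powr (2 + 2 * \<alpha>) * Le + Lt)"

lemma received_powr_moment:
  assumes i: "1 \<le> i" and x: "0 \<le> x" "x \<le> zu"
  shows "integrable P (\<lambda>\<omega>. \<bar>eps i \<omega> * x + eta i \<omega>\<bar> powr (2 + 2 * \<alpha>))"
    "(\<integral>\<omega>. \<bar>eps i \<omega> * x + eta i \<omega>\<bar> powr (2 + 2 * \<alpha>) \<partial>P) \<le> received_moment_bound zu"
proof -
  define q where "q = 2 + 2 * \<alpha>"
  have q: "q \<ge> 1" using alpha by (simp add: q_def)
  have [measurable]: "eps i \<in> borel_measurable P" "eta i \<in> borel_measurable P"
    using eps_measurable[OF i] eta_measurable[OF i] .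
  define majorant where
    "majorant \<omega> = 2 powr (q - 1) * (x powr q * \<bar>eps i \<omega>\<bar> powr q + \<bar>eta i \<omega>\<bar> powr q)" for \<omega>
  have majorant_integrable: "integrable P majorant"
    unfolding majorant_def q_def using eps_moments(1)[OF i] eta_moments(1)[OF i] by simp
  have bound: "\<bar>eps i \<omega> * x + eta i \<omega>\<bar> powr q \<le> majorant \<omega>" for \<omega>
    unfolding majorant_def using x q by (intro abs_affine_powr_le) auto
  show integrable: "integrable P (\<lambda>\<omega>. \<bar>eps i \<omega> * x + eta i \<omega>\<bar> powr (2 + 2 * \<alpha>))"
    unfolding q_def[symmetric] using bound
    by (intro Bochner_Integration.integrable_bound[OF majorant_integrable] AE_I2) (auto simp: majorant_def)
  have "(\<integral>\<omega>. \<bar>eps i \<omega> * x + eta i \<omega>\<bar> powr q \<partial>P) \<le> (\<integral>\<omega>. majorant \<omega> \<partial>P)"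
    using integrable majorant_integrable bound unfolding q_def by (intro integral_mono) auto
  also have "\<dots> = 2 powr (q - 1) * (x powr q * (\<integral>\<omega>. \<bar>eps i \<omega>\<bar> powr q \<partial>P) + (\<integral>\<omega>. \<bar>eta i \<omega>\<bar> powr q \<partial>P))"
    unfolding majorant_def q_def using eps_moments(1)[OF i] eta_moments(1)[OF i]
    by (simp add: Bochner_Integration.integral_add)
  also have "\<dots> \<le> 2 powr (q - 1) * (zu powr q * Le + Lt)"
  proof (intro mult_left_mono add_mono)
    have "x powr q \<le> zu powr q" using x q by (intro powr_mono2) auto
    then show "x powr q * (\<integral>\<omega>. \<bar>eps i \<omega>\<bar> powr q \<partial>P) \<le> zu powr q * Le"
      using eps_moments(2)[OF i] moment_bounds_nonneg unfolding q_def by (intro mult_mono) auto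
  qed (use eta_moments(2)[OF i] q_def in auto)
  also have "\<dots> = received_moment_bound zu"
    unfolding received_moment_bound_def q_def by (simp add: algebra_simps)
  finally show "(\<integral>\<omega>. \<bar>eps i \<omega> * x + eta i \<omega>\<bar> powr (2 + 2 * \<alpha>) \<partial>P) \<le> received_moment_bound zu"
    unfolding q_def .
qed

lemma mean_clipped_energy_lower:
  assumes i: "1 \<le> i" and x: "0 \<le> zl" "zl \<le> x" "x \<le> zu" and c: "c > 0"
  shows "sl * zl\<^sup>2 + nl - received_moment_bound zu / c powr \<alpha> \<le> mean_clipped_energy c i x"
proof -
  let ?w = "\<lambda>\<omega>. eps i \<omega> * x + eta i \<omega>"
  note square = received_second_moment[OF i x(1,2)]
  note powr_moment = received_powr_moment[OF i order.trans[OF x(1,2)] x(3)]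
  have "sl * zl\<^sup>2 + nl - received_moment_bound zu / c powr \<alpha>
      \<le> (\<integral>\<omega>. (?w \<omega>)\<^sup>2 \<partial>P) - (\<integral>\<omega>. \<bar>?w \<omega>\<bar> powr (2 + 2 * \<alpha>) \<partial>P) / c powr \<alpha>"
    using square(2) powr_moment(2) c by (intro diff_mono divide_right_mono) auto
  also have "\<dots> = (\<integral>\<omega>. (?w \<omega>)\<^sup>2 - \<bar>?w \<omega>\<bar> powr (2 + 2 * \<alpha>) / c powr \<alpha> \<partial>P)"
    using square(1) powr_moment(1) by (simp add: Bochner_Integration.integral_diff)
  also have "\<dots> \<le> mean_clipped_energy c i x"
    unfolding mean_clipped_energy_def
  proof (rule integral_mono)
    show "integrable P (\<lambda>\<omega>. (?w \<omega>)\<^sup>2 - \<bar>?w \<omega>\<bar> powr (2 + 2 * \<alpha>) / c powr \<alpha>)"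
      using square(1) powr_moment(1) by simp
    show "integrable P (clipped_energy c i x)"
      using integrable_clipped_energy[OF i] c by simp
    show "(?w \<omega>)\<^sup>2 - \<bar>?w \<omega>\<bar> powr (2 + 2 * \<alpha>) / c powr \<alpha> \<le> clipped_energy c i x \<omega>" for \<omega>
      using min_ge_sub_powr_div_powr[of "(?w \<omega>)\<^sup>2" c \<alpha>] c alpha
      by (simp add: clipped_energy_def power2_powr_eq_abs_powr)
  qed
  finally show ?thesis .
qed

lemma clipped_energy_second_moment:
  assumes i: "1 \<le> i" and x: "0 \<le> x" "x \<le> zu" and c: "c > 0"
  shows "(\<integral>\<omega>. (clipped_energy c i x \<omega>)\<^sup>2 \<partial>P) \<le> c powr (1 - \<alpha>) * received_moment_bound zu"
proof -
  let ?w = "\<lambda>\<omega>. eps i \<omega> * x + eta i \<omega>"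
  note powr_moment = received_powr_moment[OF i x]
  have "integrable P (\<lambda>\<omega>. (clipped_energy c i x \<omega>)\<^sup>2)"
    using clipped_energy_bounds measurable_Pair2[OF clipped_energy_measurable[OF i]] c
    by (intro integrable_const_bound[where B="c * c"]) (auto simp: power2_eq_square intro!: mult_mono)
  then have "(\<integral>\<omega>. (clipped_energy c i x \<omega>)\<^sup>2 \<partial>P) \<le> (\<integral>\<omega>. c powr (1 - \<alpha>) * \<bar>?w \<omega>\<bar> powr (2 + 2 * \<alpha>) \<partial>P)"
    using powr_moment(1) power2_min_le_powr[of "(?w _)\<^sup>2" c \<alpha>] c alpha
    by (intro integral_mono) (auto simp: clipped_energy_def power2_powr_eq_abs_powr)
  also have "\<dots> = c powr (1 - \<alpha>) * (\<integral>\<omega>. \<bar>?w \<omega>\<bar> powr (2 + 2 * \<alpha>) \<partial>P)"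
    by simp
  also have "\<dots> \<le> c powr (1 - \<alpha>) * received_moment_bound zu"
    using powr_moment(2) by (intro mult_left_mono) auto
  finally show ?thesis .
qed

lemma missed_detection_bound:
  assumes X: "X \<in> Sigma_adm P eps eta n zl zu" and zl: "0 \<le> zl" and p: "0 < p" and n: "1 \<le> n"
  shows "prob {\<omega> \<in> space P. (\<Sum>i=1..n. (eps i \<omega> * X i \<omega> + eta i \<omega>)\<^sup>2)
      \<le> real n * (sl * zl\<^sup>2 + nl - (32 * zu powr (2 + 2 * \<alpha>) * Le + 32 * Lt) powr (1 / (1 + \<alpha>))
                      / (p * real n powr (\<alpha> / (1 + \<alpha>))))} \<le> p"
proof (cases "p < 1")
  case False
  then show ?thesis using prob_le_1 by (meson order.trans not_less)
next
  case True
  define L where "L = zu powr (2 + 2 * \<alpha>) * Le + Lt"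
  define c where "c = real n powr (1 / (1 + \<alpha>)) * (32 * L) powr (1 / (1 + \<alpha>)) / p"
  define K where "K = received_moment_bound zu"
  have L: "L > 0" using eta_moment_pos moment_bounds_nonneg by (simp add: L_def add_nonneg_pos)
  have K: "K = 2 powr (1 + 2 * \<alpha>) * L" by (simp add: K_def received_moment_bound_def L_def)
  note level = truncation_level[OF alpha p True n L, folded c_def K]
  have "real n = real n powr (1 / (1 + \<alpha>)) * real n powr (\<alpha> / (1 + \<alpha>))"
    using n alpha by (simp add: powr_add[symmetric] add_divide_distrib[symmetric])
  then have threshold: "real n * (sl * zl\<^sup>2 + nl - (32 * L) powr (1 / (1 + \<alpha>)) / (p * real n powr (\<alpha> / (1 + \<alpha>))))
      = real n * (sl * zl\<^sup>2 + nl) - c"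
    using n p by (simp add: c_def field_simps)
  have "prob {\<omega> \<in> space P. (\<Sum>i=1..n. (eps i \<omega> * X i \<omega> + eta i \<omega>)\<^sup>2) \<le> real n * (sl * zl\<^sup>2 + nl) - c}
      \<le> n * (c powr (1 - \<alpha>) * K) / (c - n * (K / c powr \<alpha>))\<^sup>2"
  proof (rule prob_energy_le_clipped[OF X level(1)])
    show "n * (K / c powr \<alpha>) < c" using level(2) by simp
    show "sl * zl\<^sup>2 + nl - K / c powr \<alpha> \<le> mean_clipped_energy c i x"
      if "1 \<le> i" "zl \<le> x" "x \<le> zu" for i x
      unfolding K_def using mean_clipped_energy_lower that zl level(1) by blast
    show "(\<integral>\<omega>. (clipped_energy c i x \<omega>)\<^sup>2 \<partial>P) \<le> c powr (1 - \<alpha>) * K"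
      if "1 \<le> i" "zl \<le> x" "x \<le> zu" for i x
      unfolding K_def using clipped_energy_second_moment that zl level(1) by force
  qed
  also have "\<dots> \<le> p" by (rule level(3))
  finally show ?thesis
    unfolding threshold[symmetric] by (simp add: L_def distrib_left mult.assoc)
qed

end

theorem theorem4p1:
  fixes M :: "'a measure" and Ps :: "'a measure set"
    and eps eta :: "nat \<Rightarrow> 'a \<Rightarrow> real"
    and \<alpha> \<sigma>u \<sigma>l \<nu>u \<nu>l \<zeta>l \<zeta>u p :: real and n :: nat
  assumes probs: "\<And>P. P \<in> Ps \<Longrightarrow> prob_space P \<and> sets P = sets M"
    and meas_eps: "\<And>i. i \<ge> 1 \<Longrightarrow> eps i \<in> borel_measurable M"
    and meas_eta: "\<And>i. i \<ge> 1 \<Longrightarrow> eta i \<in> borel_measurable M"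
    and iid_eps: "\<And>P. P \<in> Ps \<Longrightarrow> prob_space.indep_vars P (\<lambda>_. borel) eps {1..}
                     \<and> (\<forall>i\<ge>1. distr P borel (eps i) = distr P borel (eps 1))"
    and iid_eta: "\<And>P. P \<in> Ps \<Longrightarrow> prob_space.indep_vars P (\<lambda>_. borel) eta {1..}
                     \<and> (\<forall>i\<ge>1. distr P borel (eta i) = distr P borel (eta 1))"
    and indep: "\<And>P. P \<in> Ps \<Longrightarrow> prob_space.indep_var P
                   (PiM {1..} (\<lambda>_. borel)) (\<lambda>\<omega>. \<lambda>i\<in>{1..}. eps i \<omega>)
                   (PiM {1..} (\<lambda>_. borel)) (\<lambda>\<omega>. \<lambda>i\<in>{1..}. eta i \<omega>)"
    and alpha: "0 < \<alpha>" "\<alpha> \<le> 1"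
    and eps2u: "upexp Ps (\<lambda>x. (eps 1 x)\<^sup>2) = ereal (\<sigma>u\<^sup>2)"
    and eps2l: "- upexp Ps (\<lambda>x. - (eps 1 x)\<^sup>2) = ereal (\<sigma>l\<^sup>2)" "\<sigma>l\<^sup>2 > 0"
    and epsmom: "upexp_nn Ps (\<lambda>x. \<bar>eps 1 x\<bar> powr (2 + 2 * \<alpha>)) < \<infinity>"
    and eta1: "upexp Ps (\<lambda>x. eta 1 x) = 0" "upexp Ps (\<lambda>x. - eta 1 x) = 0"
    and eta2u: "upexp Ps (\<lambda>x. (eta 1 x)\<^sup>2) = ereal (\<nu>u\<^sup>2)"
    and eta2l: "- upexp Ps (\<lambda>x. - (eta 1 x)\<^sup>2) = ereal (\<nu>l\<^sup>2)" "\<nu>l\<^sup>2 > 0"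
    and etamom: "upexp_nn Ps (\<lambda>x. \<bar>eta 1 x\<bar> powr (2 + 2 * \<alpha>)) < \<infinity>"
    and zeta: "0 < \<zeta>l" "\<zeta>l < \<zeta>u"
    and p: "p > 0"
    and n: "n \<ge> 1"
  shows "let C = (32 * \<zeta>u powr (2 + 2 * \<alpha>)
                     * enn2real (upexp_nn Ps (\<lambda>x. \<bar>eps 1 x\<bar> powr (2 + 2 * \<alpha>)))
                   + 32 * enn2real (upexp_nn Ps (\<lambda>x. \<bar>eta 1 x\<bar> powr (2 + 2 * \<alpha>))))
                  powr (1 / (1 + \<alpha>));
             \<gamma> = \<sigma>l\<^sup>2 * \<zeta>l\<^sup>2 + \<nu>l\<^sup>2 - C / (p * real n powr (\<alpha> / (1 + \<alpha>)))
         in \<forall>P\<in>Ps. \<forall>X\<in>Sigma_adm M eps eta n \<zeta>l \<zeta>u.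
              measure P {\<omega>\<in>space P. (\<Sum>i=1..n. (eps i \<omega> * X i \<omega> + eta i \<omega>)\<^sup>2) \<le> real n * \<gamma>} \<le> p"
proof -
  define Le where "Le = enn2real (upexp_nn Ps (\<lambda>x. \<bar>eps 1 x\<bar> powr (2 + 2 * \<alpha>)))"
  define Lt where "Lt = enn2real (upexp_nn Ps (\<lambda>x. \<bar>eta 1 x\<bar> powr (2 + 2 * \<alpha>)))"
  have "measure P {\<omega>\<in>space P. (\<Sum>i=1..n. (eps i \<omega> * X i \<omega> + eta i \<omega>)\<^sup>2) \<le> real n * (\<sigma>l\<^sup>2 * \<zeta>l\<^sup>2 + \<nu>l\<^sup>2
          - (32 * \<zeta>u powr (2 + 2 * \<alpha>) * Le + 32 * Lt) powr (1 / (1 + \<alpha>)) / (p * real n powr (\<alpha> / (1 + \<alpha>))))}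
        \<le> p"
    if P: "P \<in> Ps" and X: "X \<in> Sigma_adm M eps eta n \<zeta>l \<zeta>u" for P X
  proof -
    have sets: "sets P = sets M" and "prob_space P" using probs[OF P] by auto
    have "fading_channel P eps eta"
    proof (intro fading_channel.intro[OF \<open>prob_space P\<close>] fading_channel_axioms.intro)
      show "eps i \<in> borel_measurable P" "eta i \<in> borel_measurable P" if "1 \<le> i" for i
        using meas_eps[OF that] meas_eta[OF that] by (simp_all add: measurable_cong_sets[OF sets refl])
    qed (use iid_eps[OF P] iid_eta[OF P] indep[OF P] in blast)+
    moreover have "fading_channel_moments_axioms P eps eta \<alpha> Le Lt (\<sigma>l\<^sup>2) (\<nu>l\<^sup>2)"
      unfolding Le_def Lt_def
      by (rule fading_channel_moments_axioms.intro[where P=P and eps=eps and eta=eta, OF alpha _ _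
            nn_integral_le_upexp_nn[OF P epsmom] nn_integral_le_upexp_nn[OF P etamom]
            enn2real_nonneg enn2real_nonneg lower_upexp_le_integral[OF P eps2l(1)]
            lower_upexp_le_integral[OF P eta2l(1)] eta2l(2) integral_eq_0_if_upexp_eq_0[OF P eta1]])
         (use conjunct2[OF iid_eps[OF P]] conjunct2[OF iid_eta[OF P]] in blast)+
    ultimately interpret fading_channel_moments P eps eta \<alpha> Le Lt "\<sigma>l\<^sup>2" "\<nu>l\<^sup>2"
      by (rule fading_channel_moments.intro)
    have "X \<in> Sigma_adm P eps eta n \<zeta>l \<zeta>u"
      using X sets_eq_imp_space_eq[OF sets] by (simp add: Sigma_adm_def filt_def)
    then show ?thesis using missed_detection_bound[of X n "\<zeta>l"] zeta p n by simp
  qed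
  then show ?thesis unfolding Let_def Le_def Lt_def by blast
qed

end
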